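(* Let $d\ge 1$, $\sigma>0$, and let $L$ be the operator on $C^2(\mathbb{R}^d\times\mathbb{R}^d)$ given by \[(Lf)(p,\xi)=\sum_{j=1}^d p_j\frac{\partial f}{\partial \xi_j}(p,\xi)+\frac{\sigma^2}{2}\Delta_p f(p,\xi),\qquad p,\xi\in\mathbb{R}^d .\] For $\alpha\in\mathbb{R}$ and $\beta\ge 0$ define, for smooth $f,g$, \[\Gamma^{\alpha,\beta}(f,g)=\sum_{i=1}^d\Big(\frac{\partial f}{\partial p_i}-\alpha\frac{\partial f}{\partial \xi_i}\Big)\Big(\frac{\partial g}{\partial p_i}-\alpha\frac{\partial g}{\partial \xi_i}\Big)+\beta\sum_{i=1}^d\frac{\partial f}{\partial \xi_i}\frac{\partial g}{\partial \xi_i},\] $\Gamma^{\alpha,\beta}(f)=\Gamma^{\alpha,\beta}(f,f)$, and $\Gamma_2^{\alpha,\beta}(f)=\frac12 L\Gamma^{\alpha,\beta}(f)-\Gamma^{\alpha,\beta}(f,Lf)$. Then for every $f\in C^\infty(\mathbb{R}^d\times\mathbb{R}^d)$, \[\Gamma_2^{\alpha,\beta}(f)\ge \alpha\|\nabla_\xi f\|^2-\langle\nabla_\xi f,\nabla_p f\rangle .\]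
   Context: $\Delta_p$ denotes the Laplacian on $\mathbb{R}^d$ acting in the variable $p$; $\nabla_p$, $\nabla_\xi$ denote the Euclidean gradients in the variables $p$ and $\xi$; $\|\cdot\|$ and $\langle\cdot,\cdot\rangle$ are the Euclidean norm and inner product on $\mathbb{R}^d$. *)

theory Defs
  imports "HOL-Analysis.Analysis"
begin

type_synonym 'n phase = "(real^'n) \<times> (real^'n)"

fun Ck :: "nat \<Rightarrow> ('a::euclidean_space \<Rightarrow> real) \<Rightarrow> bool" where
  "Ck 0 g = continuous_on UNIV g"
| "Ck (Suc k) g = (g differentiable_on UNIV \<and>
      (\<forall>v. Ck k (\<lambda>x. frechet_derivative g (at x) v)))"

definition smooth :: "('a::euclidean_space \<Rightarrow> real) \<Rightarrow> bool" where
  "smooth g \<longleftrightarrow> (\<forall>k. Ck k g)"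

definition dp :: "'n::finite \<Rightarrow> ('n phase \<Rightarrow> real) \<Rightarrow> 'n phase \<Rightarrow> real" where
  "dp i f x = frechet_derivative f (at x) (axis i 1, 0)"

definition dxi :: "'n::finite \<Rightarrow> ('n phase \<Rightarrow> real) \<Rightarrow> 'n phase \<Rightarrow> real" where
  "dxi i f x = frechet_derivative f (at x) (0, axis i 1)"

definition Lop :: "real \<Rightarrow> ('n::finite phase \<Rightarrow> real) \<Rightarrow> 'n phase \<Rightarrow> real" where
  "Lop \<sigma> f x = (\<Sum>j\<in>UNIV. (fst x $ j) * dxi j f x)
                 + \<sigma>\<^sup>2 / 2 * (\<Sum>j\<in>UNIV. dp j (dp j f) x)"

definition Gam :: "real \<Rightarrow> real \<Rightarrow> ('n::finite phase \<Rightarrow> real) \<Rightarrow> ('n phase \<Rightarrow> real) \<Rightarrow> 'n phase \<Rightarrow> real" where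
  "Gam \<alpha> \<beta> f g x = (\<Sum>i\<in>UNIV. (dp i f x - \<alpha> * dxi i f x) * (dp i g x - \<alpha> * dxi i g x))
                     + \<beta> * (\<Sum>i\<in>UNIV. dxi i f x * dxi i g x)"

definition Gam2 :: "real \<Rightarrow> real \<Rightarrow> real \<Rightarrow> ('n::finite phase \<Rightarrow> real) \<Rightarrow> 'n phase \<Rightarrow> real" where
  "Gam2 \<sigma> \<alpha> \<beta> f x = 1/2 * Lop \<sigma> (Gam \<alpha> \<beta> f f) x - Gam \<alpha> \<beta> f (Lop \<sigma> f) x"

definition grad_p :: "('n::finite phase \<Rightarrow> real) \<Rightarrow> 'n phase \<Rightarrow> real^'n" where
  "grad_p f x = (\<chi> i. dp i f x)"

definition grad_xi :: "('n::finite phase \<Rightarrow> real) \<Rightarrow> 'n phase \<Rightarrow> real^'n" where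
  "grad_xi f x = (\<chi> i. dxi i f x)"

end

(*
  Write L = X + \<sigma>\<^sup>2/2 \<Sigma>\<^sub>j \<partial>p\<^sub>j\<^sup>2 with the drift X = \<Sigma>\<^sub>j p\<^sub>j \<partial>\<xi>\<^sub>j.  Since X is a derivation,
  every twice differentiable g satisfies 1/2 L(g\<^sup>2) - g Lg = \<sigma>\<^sup>2/2 \<Sigma>\<^sub>j (\<partial>p\<^sub>j g)\<^sup>2.
  \<Gamma>(f) is a sum of squares D f with D = \<partial>p\<^sub>i - \<alpha> \<partial>\<xi>\<^sub>i and D = \<surd>\<beta> \<partial>\<xi>\<^sub>i, and by symmetry of
  mixed partials each such D commutes with L up to [\<partial>p\<^sub>i, L] = \<partial>\<xi>\<^sub>i.  Hence \<Gamma>\<^sub>2(f) is the sum of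
  the nonnegative terms \<sigma>\<^sup>2/2 \<Sigma>\<^sub>j (\<partial>p\<^sub>j D f)\<^sup>2 and of -\<Sigma>\<^sub>i (\<partial>p\<^sub>i f - \<alpha> \<partial>\<xi>\<^sub>i f) \<partial>\<xi>\<^sub>i f,
  which is exactly \<alpha> |\<nabla>\<xi> f|\<^sup>2 - \<langle>\<nabla>\<xi> f, \<nabla>p f\<rangle>.
*)
theory Submission
  imports Defs
begin

definition dderiv :: "'a::real_normed_vector \<Rightarrow> ('a \<Rightarrow> real) \<Rightarrow> 'a \<Rightarrow> real" where
  "dderiv v g x = frechet_derivative g (at x) v"

lemma dderiv_eqI: "(g has_derivative g') (at x) \<Longrightarrow> dderiv v g x = g' v"
  unfolding dderiv_def by (metis frechet_derivative_at)

lemma has_derivative_dderiv: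
  "g differentiable (at x) \<Longrightarrow> (g has_derivative (\<lambda>v. dderiv v g x)) (at x)"
  unfolding dderiv_def by (metis frechet_derivative_works)

lemma dderiv_const [simp]: "dderiv v (\<lambda>y. c) = (\<lambda>x. 0)"
  by (intro ext dderiv_eqI[where g'="\<lambda>_. 0", simplified]) (rule has_derivative_const)

lemma dderiv_linear: "bounded_linear l \<Longrightarrow> dderiv v l = (\<lambda>x. l v)"
  by (intro ext dderiv_eqI bounded_linear_imp_has_derivative)

lemma dderiv_add:
  "(\<And>z. g differentiable (at z)) \<Longrightarrow> (\<And>z. h differentiable (at z)) \<Longrightarrow>
   dderiv v (\<lambda>y. g y + h y) = (\<lambda>x. dderiv v g x + dderiv v h x)"
  by (intro ext dderiv_eqI has_derivative_add has_derivative_dderiv)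

lemma dderiv_diff:
  "(\<And>z. g differentiable (at z)) \<Longrightarrow> (\<And>z. h differentiable (at z)) \<Longrightarrow>
   dderiv v (\<lambda>y. g y - h y) = (\<lambda>x. dderiv v g x - dderiv v h x)"
  by (intro ext dderiv_eqI has_derivative_diff has_derivative_dderiv)

lemma dderiv_mult:
  "(\<And>z. g differentiable (at z)) \<Longrightarrow> (\<And>z. h differentiable (at z)) \<Longrightarrow>
   dderiv v (\<lambda>y. g y * h y) = (\<lambda>x. g x * dderiv v h x + dderiv v g x * h x)"
  by (intro ext dderiv_eqI has_derivative_mult has_derivative_dderiv)

lemma dderiv_cmult:
  "(\<And>z. g differentiable (at z)) \<Longrightarrow> dderiv v (\<lambda>y. c * g y) = (\<lambda>x. c * dderiv v g x)"
  by (intro ext dderiv_eqI has_derivative_mult_right has_derivative_dderiv)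

lemma dderiv_sum:
  "(\<And>i z. i \<in> I \<Longrightarrow> G i differentiable (at z)) \<Longrightarrow>
   dderiv v (\<lambda>y. \<Sum>i\<in>I. G i y) = (\<lambda>x. \<Sum>i\<in>I. dderiv v (G i) x)"
  by (intro ext dderiv_eqI has_derivative_sum has_derivative_dderiv) auto

lemmas dderiv_rules = dderiv_add dderiv_diff dderiv_mult dderiv_cmult dderiv_sum

lemma has_real_derivative_dderiv_line:
  assumes "\<And>z. g differentiable (at z)"
  shows "((\<lambda>r. g (y + r *\<^sub>R v)) has_real_derivative dderiv v g (y + r *\<^sub>R v)) (at r)"
proof -
  let ?z = "y + r *\<^sub>R v"
  have "((g \<circ> (\<lambda>r. y + r *\<^sub>R v)) has_derivative ((\<lambda>w. dderiv w g ?z) \<circ> (\<lambda>h. h *\<^sub>R v))) (at r)"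
    by (rule diff_chain_at) (auto intro!: derivative_eq_intros has_derivative_dderiv assms)
  moreover have "linear (\<lambda>w. dderiv w g ?z)"
    using has_derivative_dderiv[OF assms] has_derivative_linear by blast
  then have "(\<lambda>h. dderiv (h *\<^sub>R v) g ?z) = (\<lambda>h. dderiv v g ?z * h)"
    using linear_cmul by (fastforce simp: mult.commute)
  ultimately show ?thesis
    unfolding has_field_derivative_def by (simp add: o_def)
qed

lemma second_difference_mvt:
  assumes dg: "\<And>z. g differentiable (at z)"
    and dgu: "\<And>z. dderiv u g differentiable (at z)"
    and t: "t > 0"
  obtains y where "norm (y - x) \<le> t * (norm u + norm v)"
    and "g (x + t *\<^sub>R u + t *\<^sub>R v) - g (x + t *\<^sub>R u) - g (x + t *\<^sub>R v) + g x
           = t * t * dderiv v (dderiv u g) y"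
proof -
  define \<phi> where "\<phi> s = g ((x + t *\<^sub>R v) + s *\<^sub>R u) - g (x + s *\<^sub>R u)" for s
  have "\<And>s. DERIV \<phi> s :> dderiv u g ((x + t *\<^sub>R v) + s *\<^sub>R u) - dderiv u g (x + s *\<^sub>R u)"
    unfolding \<phi>_def by (intro DERIV_diff has_real_derivative_dderiv_line dg)
  then obtain s where s: "0 < s" "s < t"
    and \<phi>: "\<phi> t - \<phi> 0 = t * (dderiv u g ((x + t *\<^sub>R v) + s *\<^sub>R u) - dderiv u g (x + s *\<^sub>R u))"
    using MVT2[OF t, of \<phi> "\<lambda>s. dderiv u g ((x + t *\<^sub>R v) + s *\<^sub>R u) - dderiv u g (x + s *\<^sub>R u)"]
    by auto
  define \<psi> where "\<psi> r = dderiv u g ((x + s *\<^sub>R u) + r *\<^sub>R v)" for r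
  have "\<And>r. DERIV \<psi> r :> dderiv v (dderiv u g) ((x + s *\<^sub>R u) + r *\<^sub>R v)"
    unfolding \<psi>_def by (intro has_real_derivative_dderiv_line dgu)
  then obtain r where r: "0 < r" "r < t"
    and \<psi>: "\<psi> t - \<psi> 0 = t * dderiv v (dderiv u g) ((x + s *\<^sub>R u) + r *\<^sub>R v)"
    using MVT2[OF t, of \<psi> "\<lambda>r. dderiv v (dderiv u g) ((x + s *\<^sub>R u) + r *\<^sub>R v)"]
    by auto
  let ?y = "x + s *\<^sub>R u + r *\<^sub>R v"
  have "norm (?y - x) \<le> norm (s *\<^sub>R u) + norm (r *\<^sub>R v)"
    using norm_triangle_ineq[of "s *\<^sub>R u" "r *\<^sub>R v"] by (simp add: add.assoc)
  also have "\<dots> \<le> t * (norm u + norm v)"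
    using s r by (simp add: distrib_left add_mono mult_right_mono)
  finally have "norm (?y - x) \<le> t * (norm u + norm v)" .
  moreover have "g (x + t *\<^sub>R u + t *\<^sub>R v) - g (x + t *\<^sub>R u) - g (x + t *\<^sub>R v) + g x
      = t * t * dderiv v (dderiv u g) ?y"
    using \<phi> \<psi> unfolding \<phi>_def \<psi>_def by (simp add: algebra_simps)
  ultimately show ?thesis by (rule that)
qed

lemma dderiv_commute:
  assumes dg: "\<And>z. g differentiable (at z)"
    and dgu: "\<And>z. dderiv u g differentiable (at z)"
    and dgv: "\<And>z. dderiv v g differentiable (at z)"
    and cuv: "continuous_on UNIV (dderiv v (dderiv u g))"
    and cvu: "continuous_on UNIV (dderiv u (dderiv v g))"
  shows "dderiv v (dderiv u g) x = dderiv u (dderiv v g) x"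
proof (rule ccontr)
  (* The same second difference, divided by t^2, equals either mixed derivative at some point
     within t (|u| + |v|) of x; for small t continuity makes both values close to their values at x. *)
  let ?G1 = "dderiv v (dderiv u g)" and ?G2 = "dderiv u (dderiv v g)"
  assume ne: "?G1 x \<noteq> ?G2 x"
  define e where "e = \<bar>?G1 x - ?G2 x\<bar> / 2"
  have e: "e > 0" using ne by (simp add: e_def)
  obtain d1 where d1: "d1 > 0" "\<And>y. dist y x < d1 \<Longrightarrow> dist (?G1 y) (?G1 x) < e"
    using cuv e unfolding continuous_on_iff by (metis UNIV_I)
  obtain d2 where d2: "d2 > 0" "\<And>y. dist y x < d2 \<Longrightarrow> dist (?G2 y) (?G2 x) < e"
    using cvu e unfolding continuous_on_iff by (metis UNIV_I)
  define t where "t = min d1 d2 / (2 * (norm u + norm v + 1))"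
  have nuv: "norm u + norm v + 1 > 0" by (simp add: add_nonneg_pos)
  then have t: "t > 0" using d1 d2 unfolding t_def by simp
  have tb: "t * (norm u + norm v) < min d1 d2"
  proof -
    have "t * (norm u + norm v) \<le> t * (norm u + norm v + 1)" using t by simp
    also have "\<dots> = min d1 d2 / 2" using nuv unfolding t_def by (simp add: field_simps)
    also have "\<dots> < min d1 d2" using d1(1) d2(1) by (simp add: min_def)
    finally show ?thesis .
  qed
  obtain y1 where y1: "norm (y1 - x) \<le> t * (norm u + norm v)"
    and g1: "g (x + t *\<^sub>R u + t *\<^sub>R v) - g (x + t *\<^sub>R u) - g (x + t *\<^sub>R v) + g x = t * t * ?G1 y1"
    using second_difference_mvt[OF dg dgu t] .
  obtain y2 where y2: "norm (y2 - x) \<le> t * (norm v + norm u)"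
    and g2: "g (x + t *\<^sub>R v + t *\<^sub>R u) - g (x + t *\<^sub>R v) - g (x + t *\<^sub>R u) + g x = t * t * ?G2 y2"
    using second_difference_mvt[OF dg dgv t] .
  have "?G1 y1 = ?G2 y2" using g1 g2 t by (simp add: algebra_simps)
  moreover have "\<bar>?G1 y1 - ?G1 x\<bar> < e"
    using d1(2)[of y1] y1 tb by (simp add: dist_norm dist_real_def)
  moreover have "\<bar>?G2 y2 - ?G2 x\<bar> < e"
    using d2(2)[of y2] y2 tb by (simp add: dist_norm dist_real_def add.commute)
  moreover have "\<And>A B C :: real. \<bar>C - A\<bar> < \<bar>A - B\<bar> / 2 \<Longrightarrow> \<bar>C - B\<bar> < \<bar>A - B\<bar> / 2 \<Longrightarrow> False"
    by (simp add: abs_if split: if_splits)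
  ultimately show False unfolding e_def by metis
qed

lemma smooth_dderiv: "smooth g \<Longrightarrow> smooth (dderiv v g)"
  unfolding smooth_def dderiv_def[abs_def] by (metis Ck.simps(2))

lemma smooth_differentiable: "smooth g \<Longrightarrow> g differentiable (at x)"
  unfolding smooth_def by (metis Ck.simps(2) differentiable_on_def UNIV_I)

lemma smooth_continuous: "smooth g \<Longrightarrow> continuous_on UNIV g"
  unfolding smooth_def by (metis Ck.simps(1))

lemma smooth_dderiv_commute: "smooth g \<Longrightarrow> dderiv u (dderiv v g) = dderiv v (dderiv u g)"
  by (intro ext dderiv_commute) (auto intro: smooth_differentiable smooth_dderiv smooth_continuous)

lemma smooth_dderiv_commute_twice:
  assumes "smooth g"
  shows "dderiv u (dderiv v (dderiv v g)) = dderiv v (dderiv v (dderiv u g))"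
proof -
  have outer: "dderiv u (dderiv v (dderiv v g)) = dderiv v (dderiv u (dderiv v g))"
    using smooth_dderiv[OF assms] by (rule smooth_dderiv_commute)
  have inner: "dderiv u (dderiv v g) = dderiv v (dderiv u g)"
    using assms by (rule smooth_dderiv_commute)
  show ?thesis by (subst outer) (subst inner, rule refl)
qed

definition twice_differentiable :: "('a::real_normed_vector \<Rightarrow> real) \<Rightarrow> bool" where
  "twice_differentiable g \<longleftrightarrow>
     (\<forall>x. g differentiable (at x)) \<and> (\<forall>v x. dderiv v g differentiable (at x))"

lemma twice_differentiableD:
  assumes "twice_differentiable g"
  shows "g differentiable (at x)" and "dderiv v g differentiable (at x)"
  using assms unfolding twice_differentiable_def by blast+

lemma smooth_imp_twice_differentiable: "smooth g \<Longrightarrow> twice_differentiable g"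
  unfolding twice_differentiable_def by (blast intro: smooth_differentiable smooth_dderiv)

lemma twice_differentiable_const [simp]: "twice_differentiable (\<lambda>x. c)"
  unfolding twice_differentiable_def by simp

lemma twice_differentiable_add:
  "twice_differentiable g \<Longrightarrow> twice_differentiable h \<Longrightarrow> twice_differentiable (\<lambda>x. g x + h x)"
  unfolding twice_differentiable_def by (simp add: dderiv_add)

lemma twice_differentiable_diff:
  "twice_differentiable g \<Longrightarrow> twice_differentiable h \<Longrightarrow> twice_differentiable (\<lambda>x. g x - h x)"
  unfolding twice_differentiable_def by (simp add: dderiv_diff)

lemma twice_differentiable_mult:
  "twice_differentiable g \<Longrightarrow> twice_differentiable h \<Longrightarrow> twice_differentiable (\<lambda>x. g x * h x)"
  unfolding twice_differentiable_def by (simp add: dderiv_mult)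

lemma twice_differentiable_sum:
  "finite I \<Longrightarrow> (\<And>i. i \<in> I \<Longrightarrow> twice_differentiable (G i)) \<Longrightarrow>
   twice_differentiable (\<lambda>x. \<Sum>i\<in>I. G i x)"
  unfolding twice_differentiable_def by (simp add: dderiv_sum)

lemma dp_eq_dderiv: "dp i = dderiv (axis i 1, 0)"
  by (simp add: fun_eq_iff dp_def dderiv_def)

lemma dxi_eq_dderiv: "dxi i = dderiv (0, axis i 1)"
  by (simp add: fun_eq_iff dxi_def dderiv_def)

lemma Lop_add:
  assumes "twice_differentiable g" "twice_differentiable h"
  shows "Lop \<sigma> (\<lambda>y. g y + h y) x = Lop \<sigma> g x + Lop \<sigma> h x"
  using assms unfolding Lop_def dp_eq_dderiv dxi_eq_dderiv
  by (simp add: twice_differentiableD dderiv_rules sum.distrib algebra_simps)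

lemma Lop_diff:
  assumes "twice_differentiable g" "twice_differentiable h"
  shows "Lop \<sigma> (\<lambda>y. g y - h y) x = Lop \<sigma> g x - Lop \<sigma> h x"
  using assms unfolding Lop_def dp_eq_dderiv dxi_eq_dderiv
  by (simp add: twice_differentiableD dderiv_rules sum_subtractf algebra_simps)

lemma Lop_cmult:
  assumes "twice_differentiable g"
  shows "Lop \<sigma> (\<lambda>y. c * g y) x = c * Lop \<sigma> g x"
  using assms unfolding Lop_def dp_eq_dderiv dxi_eq_dderiv
  by (simp add: twice_differentiableD dderiv_rules sum_distrib_left algebra_simps)

lemma Lop_sum:
  assumes "finite I" "\<And>i. i \<in> I \<Longrightarrow> twice_differentiable (G i)"
  shows "Lop \<sigma> (\<lambda>y. \<Sum>i\<in>I. G i y) x = (\<Sum>i\<in>I. Lop \<sigma> (G i) x)"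
  using assms unfolding Lop_def dp_eq_dderiv dxi_eq_dderiv
  by (simp add: twice_differentiableD dderiv_rules sum.distrib sum_distrib_left sum.swap[of _ UNIV I])

lemma Lop_mult:
  assumes "twice_differentiable g" "twice_differentiable h"
  shows "Lop \<sigma> (\<lambda>y. g y * h y) x
    = g x * Lop \<sigma> h x + h x * Lop \<sigma> g x + \<sigma>\<^sup>2 * (\<Sum>j\<in>UNIV. dp j g x * dp j h x)"
  using assms unfolding Lop_def dp_eq_dderiv dxi_eq_dderiv
  by (simp add: twice_differentiableD dderiv_rules sum.distrib sum_distrib_left algebra_simps)

lemma dderiv_fst_nth: "dderiv v (\<lambda>y::'n::finite phase. fst y $ j) = (\<lambda>x. fst v $ j)"
  by (intro dderiv_linear bounded_linear_compose[OF bounded_linear_vec_nth bounded_linear_fst])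

lemma differentiable_fst_nth: "(\<lambda>y::'n::finite phase. fst y $ j) differentiable (at x)"
  by (intro bounded_linear_imp_differentiable
        bounded_linear_compose[OF bounded_linear_vec_nth bounded_linear_fst])

lemma Lop_fun:
  "Lop \<sigma> f = (\<lambda>x. (\<Sum>j\<in>UNIV. fst x $ j * dxi j f x) + \<sigma>\<^sup>2 / 2 * (\<Sum>j\<in>UNIV. dp j (dp j f) x))"
  by (simp add: fun_eq_iff Lop_def)

lemma dp_Lop:
  assumes "smooth f"
  shows "dp i (Lop \<sigma> f) x = Lop \<sigma> (dp i f) x + dxi i f x"
proof -
  have "axis i 1 $ j = (if j = i then 1 else (0::real))" for j
    by (simp add: axis_def)
  then have deriv: "dp i (Lop \<sigma> f) x
      = (\<Sum>j\<in>UNIV. fst x $ j * dp i (dxi j f) x) + dxi i f x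
        + \<sigma>\<^sup>2 / 2 * (\<Sum>j\<in>UNIV. dp i (dp j (dp j f)) x)"
    using assms unfolding Lop_fun dp_eq_dderiv dxi_eq_dderiv
    by (simp add: dderiv_rules dderiv_fst_nth differentiable_fst_nth smooth_differentiable
        smooth_dderiv sum.distrib mult_if_delta del: times_divide_eq_left)
  have comm1: "dp i (dxi j f) = dxi j (dp i f)" for j
    unfolding dp_eq_dderiv dxi_eq_dderiv by (rule smooth_dderiv_commute[OF assms])
  have comm2: "dp i (dp j (dp j f)) = dp j (dp j (dp i f))" for j
    unfolding dp_eq_dderiv by (rule smooth_dderiv_commute_twice[OF assms])
  show ?thesis
    unfolding deriv Lop_def comm1 comm2 by simp
qed

lemma dxi_Lop:
  assumes "smooth f"
  shows "dxi i (Lop \<sigma> f) x = Lop \<sigma> (dxi i f) x"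
proof -
  have deriv: "dxi i (Lop \<sigma> f) x
      = (\<Sum>j\<in>UNIV. fst x $ j * dxi i (dxi j f) x)
        + \<sigma>\<^sup>2 / 2 * (\<Sum>j\<in>UNIV. dxi i (dp j (dp j f)) x)"
    using assms unfolding Lop_fun dp_eq_dderiv dxi_eq_dderiv
    by (simp add: dderiv_rules dderiv_fst_nth differentiable_fst_nth smooth_differentiable
        smooth_dderiv sum.distrib del: times_divide_eq_left)
  have comm1: "dxi i (dxi j f) = dxi j (dxi i f)" for j
    unfolding dxi_eq_dderiv by (rule smooth_dderiv_commute[OF assms])
  have comm2: "dxi i (dp j (dp j f)) = dp j (dp j (dxi i f))" for j
    unfolding dp_eq_dderiv dxi_eq_dderiv by (rule smooth_dderiv_commute_twice[OF assms])
  show ?thesis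
    unfolding deriv Lop_def comm1 comm2 by simp
qed

lemma Lop_square:
  assumes "twice_differentiable g"
  shows "1/2 * Lop \<sigma> (\<lambda>y. g y * g y) x - g x * Lop \<sigma> g x = \<sigma>\<^sup>2 / 2 * (\<Sum>j\<in>UNIV. (dp j g x)\<^sup>2)"
  using Lop_mult[OF assms assms] by (simp add: power2_eq_square algebra_simps)

lemma Gam2_eq:
  assumes "smooth f"
  shows "Gam2 \<sigma> \<alpha> \<beta> f x = (\<Sum>i\<in>UNIV. (\<alpha> * dxi i f x - dp i f x) * dxi i f x)
    + \<sigma>\<^sup>2 / 2 * (\<Sum>i\<in>UNIV. (\<Sum>j\<in>UNIV. (dp j (\<lambda>y. dp i f y - \<alpha> * dxi i f y) x)\<^sup>2)
                                + \<beta> * (\<Sum>j\<in>UNIV. (dp j (dxi i f) x)\<^sup>2))"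
proof -
  define A where "A i = (\<lambda>y. dp i f y - \<alpha> * dxi i f y)" for i
  have td_dp: "twice_differentiable (dp i f)" and td_dxi: "twice_differentiable (dxi i f)" for i
    using assms by (simp_all add: dp_eq_dderiv dxi_eq_dderiv smooth_dderiv smooth_imp_twice_differentiable)
  have td_cdxi: "twice_differentiable (\<lambda>y. \<alpha> * dxi i f y)" for i
    by (intro twice_differentiable_mult twice_differentiable_const td_dxi)
  have td_A: "twice_differentiable (A i)" for i
    unfolding A_def by (intro twice_differentiable_diff td_dp td_cdxi)
  have "Gam \<alpha> \<beta> f f = (\<lambda>y. (\<Sum>i\<in>UNIV. A i y * A i y) + \<beta> * (\<Sum>i\<in>UNIV. dxi i f y * dxi i f y))"
    by (simp add: fun_eq_iff Gam_def A_def)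
  then have L_Gam: "Lop \<sigma> (Gam \<alpha> \<beta> f f) x
      = (\<Sum>i\<in>UNIV. Lop \<sigma> (\<lambda>y. A i y * A i y) x) + \<beta> * (\<Sum>i\<in>UNIV. Lop \<sigma> (\<lambda>y. dxi i f y * dxi i f y) x)"
    by (simp add: Lop_add Lop_cmult Lop_sum twice_differentiable_add twice_differentiable_mult
        twice_differentiable_sum td_A td_dxi)
  have "dp i (Lop \<sigma> f) x - \<alpha> * dxi i (Lop \<sigma> f) x = Lop \<sigma> (A i) x + dxi i f x" for i
    using assms unfolding A_def by (simp add: dp_Lop dxi_Lop Lop_diff Lop_cmult td_dp td_cdxi td_dxi)
  then have Gam_Lop: "Gam \<alpha> \<beta> f (Lop \<sigma> f) x
      = (\<Sum>i\<in>UNIV. A i x * (Lop \<sigma> (A i) x + dxi i f x)) + \<beta> * (\<Sum>i\<in>UNIV. dxi i f x * Lop \<sigma> (dxi i f) x)"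
    using assms by (simp add: Gam_def A_def dxi_Lop)
  have "Gam2 \<sigma> \<alpha> \<beta> f x
      = (\<Sum>i\<in>UNIV. (1/2 * Lop \<sigma> (\<lambda>y. A i y * A i y) x - A i x * Lop \<sigma> (A i) x) - A i x * dxi i f x)
        + \<beta> * (\<Sum>i\<in>UNIV. 1/2 * Lop \<sigma> (\<lambda>y. dxi i f y * dxi i f y) x - dxi i f x * Lop \<sigma> (dxi i f) x)"
    unfolding Gam2_def L_Gam Gam_Lop
    by (simp add: algebra_simps sum_subtractf sum.distrib sum_distrib_left)
  also have "\<dots> = (\<Sum>i\<in>UNIV. \<sigma>\<^sup>2 / 2 * (\<Sum>j\<in>UNIV. (dp j (A i) x)\<^sup>2) - A i x * dxi i f x)
        + \<beta> * (\<Sum>i\<in>UNIV. \<sigma>\<^sup>2 / 2 * (\<Sum>j\<in>UNIV. (dp j (dxi i f) x)\<^sup>2))"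
    by (simp only: Lop_square td_A td_dxi)
  also have "\<dots> = (\<Sum>i\<in>UNIV. (\<alpha> * dxi i f x - dp i f x) * dxi i f x)
    + \<sigma>\<^sup>2 / 2 * (\<Sum>i\<in>UNIV. (\<Sum>j\<in>UNIV. (dp j (A i) x)\<^sup>2) + \<beta> * (\<Sum>j\<in>UNIV. (dp j (dxi i f) x)\<^sup>2))"
    by (simp add: A_def algebra_simps sum_subtractf sum.distrib sum_distrib_left)
  finally show ?thesis unfolding A_def .
qed

theorem lemma2p3:
  fixes f :: "(real^'n) \<times> (real^'n) \<Rightarrow> real"
    and \<sigma> \<alpha> \<beta> :: real
  assumes "\<sigma> > 0" and "\<beta> \<ge> 0" and "smooth f"
  shows "\<forall>p \<xi>. Gam2 \<sigma> \<alpha> \<beta> f (p, \<xi>)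
           \<ge> \<alpha> * (norm (grad_xi f (p, \<xi>)))\<^sup>2 - grad_xi f (p, \<xi>) \<bullet> grad_p f (p, \<xi>)"
proof (intro allI)
  fix p \<xi> :: "real^'n"
  let ?x = "(p, \<xi>)"
  have "\<alpha> * (norm (grad_xi f ?x))\<^sup>2 - grad_xi f ?x \<bullet> grad_p f ?x
      = (\<Sum>i\<in>UNIV. (\<alpha> * dxi i f ?x - dp i f ?x) * dxi i f ?x)"
    by (simp add: power2_norm_eq_inner inner_vec_def grad_xi_def grad_p_def algebra_simps
        sum_subtractf sum_distrib_left)
  also have "\<dots> \<le> Gam2 \<sigma> \<alpha> \<beta> f ?x"
    unfolding Gam2_eq[OF \<open>smooth f\<close>] using \<open>\<beta> \<ge> 0\<close> by (simp add: sum_nonneg)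
  finally show "\<alpha> * (norm (grad_xi f ?x))\<^sup>2 - grad_xi f ?x \<bullet> grad_p f ?x \<le> Gam2 \<sigma> \<alpha> \<beta> f ?x" .
qed

end
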